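(* Let $\varphi\in A_\infty(\Omega)$ be a Musielak–Orlicz function of uniformly lower type $p_\varphi^-$ and uniformly upper type $p_\varphi^+$ with $q(\varphi)<p_\varphi^-\le p_\varphi^+<\infty$. Then the Doob maximal operator $M$ is bounded on $L^\varphi(\Omega)$; moreover there is $C>0$ such that for all $f\in L^\varphi(\Omega)$, $$\int_\Omega\varphi(x,M(f)(x))\,d\mathbb P(x)\le C\int_\Omega\varphi(x,|f(x)|)\,d\mathbb P(x).$$
   Context: Let $(\Omega,\mathcal F,\mathbb P)$ be a probability space, $(\mathcal F_n)_{n\in\mathbb Z_+}$ a nondecreasing sequence of sub-$\sigma$-algebras of $\mathcal F$, $\mathbb E_n$ the conditional expectation w.r.t. $\mathcal F_n$, and $M(f):=\sup_{n\in\mathbb Z_+}|\mathbb E_n f|$ the Doob maximal operator. A Musielak–Orlicz function is $\varphi:\Omega\times[0,\infty)\to[0,\infty)$ with $\varphi(x,\cdot)$ nondecreasing, $\varphi(x,0)=0$, $\lim_{t\to\infty}\varphi(x,t)=\infty$ for each $x$ and $\varphi(\cdot,t)$ measurable (assumed positive and integrable) for each $t$. $L^\varphi(\Omega)$ is the space of measurable $f$ with $\|f\|_{L^\varphi(\Omega)}:=\inf\{\lambda>0:\int_\Omega\varphi(x,|f(x)|/\lambda)\,d\mathbb P\le1\}<\infty$. $\varphi$ is of uniformly lower (resp. upper) type $p$ if there is $C>0$ with $\varphi(x,st)\le Cs^p\varphi(x,t)$ for all $x$, $t\ge0$, $s\in(0,1)$ (resp. $s\ge1$). For $q>1$, $\varphi\in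 A_q(\Omega)$ if there is $K$ with $\sup_{t>0}\mathbb E_n(\varphi(\cdot,t))[\mathbb E_n(\varphi(\cdot,t)^{-1/(q-1)})]^{q-1}\le K$ a.e. for all $n$; $\varphi\in A_1(\Omega)$ if $\sup_{t>0}\mathbb E_n(\varphi(\cdot,t))/\varphi(\cdot,t)\le K$ a.e. for all $n$; $A_\infty(\Omega)=\bigcup_{q\ge1}A_q(\Omega)$; $q(\varphi):=\inf\{q\in[1,\infty):\varphi\in A_q(\Omega)\}$. *)

theory Defs
  imports "HOL-Probability.Probability"
begin

text \<open>Conditional expectations of
  nonnegative (possibly non-integrable) functions are taken in the extended
  sense via \<open>nn_cond_exp\<close>.\<close>

text \<open>Real power on extended nonnegative reals (exponent \<open>r > 0\<close> intended).\<close>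
definition enn_powr :: "ennreal \<Rightarrow> real \<Rightarrow> ennreal" where
  "enn_powr a r = (if a = \<infinity> then \<infinity> else ennreal (enn2real a powr r))"

definition MO_function :: "'a measure \<Rightarrow> ('a \<Rightarrow> real \<Rightarrow> real) \<Rightarrow> bool" where
  "MO_function M \<phi> \<longleftrightarrow>
     (\<forall>x\<in>space M. mono_on {0..} (\<phi> x) \<and> \<phi> x 0 = 0
                    \<and> (\<forall>t\<ge>0. \<phi> x t \<ge> 0) \<and> (\<forall>t>0. \<phi> x t > 0)
                    \<and> filterlim (\<phi> x) at_top at_top)
   \<and> (\<forall>t\<ge>0. (\<lambda>x. \<phi> x t) \<in> borel_measurable M \<and> integrable M (\<lambda>x. \<phi> x t))"

definition uniformly_lower_type :: "'a measure \<Rightarrow> ('a \<Rightarrow> real \<Rightarrow> real) \<Rightarrow> real \<Rightarrow> bool" where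
  "uniformly_lower_type M \<phi> p \<longleftrightarrow>
     (\<exists>C>0. \<forall>x\<in>space M. \<forall>t\<ge>0. \<forall>s. 0 < s \<and> s < 1 \<longrightarrow> \<phi> x (s * t) \<le> C * s powr p * \<phi> x t)"

definition uniformly_upper_type :: "'a measure \<Rightarrow> ('a \<Rightarrow> real \<Rightarrow> real) \<Rightarrow> real \<Rightarrow> bool" where
  "uniformly_upper_type M \<phi> p \<longleftrightarrow>
     (\<exists>C>0. \<forall>x\<in>space M. \<forall>t\<ge>0. \<forall>s\<ge>1. \<phi> x (s * t) \<le> C * s powr p * \<phi> x t)"

definition mart_Aq :: "'a measure \<Rightarrow> (nat \<Rightarrow> 'a measure) \<Rightarrow> real \<Rightarrow> ('a \<Rightarrow> real \<Rightarrow> real) \<Rightarrow> bool" where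
  "mart_Aq M F q \<phi> \<longleftrightarrow>
    (if q = 1 then
       (\<exists>K. \<forall>n. \<forall>t>0. AE x in M.
          nn_cond_exp M (F n) (\<lambda>y. ennreal (\<phi> y t)) x \<le> ennreal K * ennreal (\<phi> x t))
     else q > 1 \<and>
       (\<exists>K. \<forall>n. \<forall>t>0. AE x in M.
          nn_cond_exp M (F n) (\<lambda>y. ennreal (\<phi> y t)) x
          * enn_powr (nn_cond_exp M (F n) (\<lambda>y. ennreal (\<phi> y t powr (- 1 / (q - 1)))) x) (q - 1)
          \<le> ennreal K))"

definition mart_Ainf :: "'a measure \<Rightarrow> (nat \<Rightarrow> 'a measure) \<Rightarrow> ('a \<Rightarrow> real \<Rightarrow> real) \<Rightarrow> bool" where
  "mart_Ainf M F \<phi> \<longleftrightarrow> (\<exists>q\<ge>1. mart_Aq M F q \<phi>)"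

definition q_index :: "'a measure \<Rightarrow> (nat \<Rightarrow> 'a measure) \<Rightarrow> ('a \<Rightarrow> real \<Rightarrow> real) \<Rightarrow> real" where
  "q_index M F \<phi> = Inf {q. q \<ge> 1 \<and> mart_Aq M F q \<phi>}"

definition MO_modular :: "'a measure \<Rightarrow> ('a \<Rightarrow> real \<Rightarrow> real) \<Rightarrow> ('a \<Rightarrow> real) \<Rightarrow> ennreal" where
  "MO_modular M \<phi> f = (\<integral>\<^sup>+ x. ennreal (\<phi> x \<bar>f x\<bar>) \<partial>M)"

definition in_L_phi :: "'a measure \<Rightarrow> ('a \<Rightarrow> real \<Rightarrow> real) \<Rightarrow> ('a \<Rightarrow> real) \<Rightarrow> bool" where
  "in_L_phi M \<phi> f \<longleftrightarrow> f \<in> borel_measurable M \<and>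
     (\<exists>c>0. MO_modular M \<phi> (\<lambda>x. f x / c) \<le> 1)"

definition L_phi_norm :: "'a measure \<Rightarrow> ('a \<Rightarrow> real \<Rightarrow> real) \<Rightarrow> ('a \<Rightarrow> real) \<Rightarrow> real" where
  "L_phi_norm M \<phi> f = Inf {c. c > 0 \<and> MO_modular M \<phi> (\<lambda>x. f x / c) \<le> 1}"

definition doob_max :: "'a measure \<Rightarrow> (nat \<Rightarrow> 'a measure) \<Rightarrow> ('a \<Rightarrow> real) \<Rightarrow> 'a \<Rightarrow> ennreal" where
  "doob_max M F f x = (SUP n. ennreal \<bar>real_cond_exp M (F n) f x\<bar>)"

definition phi_ext :: "('a \<Rightarrow> real \<Rightarrow> real) \<Rightarrow> 'a \<Rightarrow> ennreal \<Rightarrow> ennreal" where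
  "phi_ext \<phi> x s = (if s = \<infinity> then \<infinity> else ennreal (\<phi> x (enn2real s)))"

end

theory Submission
  imports Defs
begin

text \<open>An \<open>A\<^sub>q\<close> weight \<open>w\<close> satisfies a weighted weak-type \<open>(q,q)\<close> estimate for the Doob maximal
  operator: where \<open>\<bbbE>\<^sub>n h\<close> exceeds \<open>\<lambda>\<close> one has \<open>\<bbbE>\<^sub>n w \<le> C \<lambda>\<^sup>-\<^sup>q \<bbbE>\<^sub>n (h\<^sup>q w)\<close> (for \<open>q > 1\<close> by
  Young's inequality and the \<open>A\<^sub>q\<close> condition), and integrating this over the stopping-time
  decomposition of \<open>{M h > \<lambda>}\<close> gives \<open>w{M h > \<lambda>} \<le> C \<lambda>\<^sup>-\<^sup>q \<integral> h\<^sup>q w\<close>, uniformly for the weights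
  \<open>\<phi>(\<cdot>, t)\<close>. Splitting \<open>\<integral> \<phi>(x, M h)\<close> over the dyadic levels of \<open>M h\<close>, applying the weak-type
  estimate to \<open>h\<close> truncated at each level, and comparing \<open>\<phi>(x, 2\<^sup>k)\<close> with \<open>\<phi>(x, h x)\<close> by the
  lower type \<open>p > q\<close> turns the double sum into a geometric series. This is the modular
  inequality; the Luxemburg norm bound follows from it by a dilation, using the lower type
  once more.\<close>

section \<open>Dyadic sums and nonnegative integrals\<close>

lemma two_powr_less_iff_less_ceiling_log:
  assumes "a > 0"
  shows "2 powr real_of_int k < a \<longleftrightarrow> k < \<lceil>log 2 a\<rceil>"
  using assms less_log_iff[of 2 a "real_of_int k"] by (simp add: less_ceiling_iff)

lemma nn_integral_dyadic_powr_le: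
  fixes a r :: real
  assumes a: "a > 0" and r: "r > 0"
  shows "(\<integral>\<^sup>+k. ennreal (2 powr (r * real_of_int k)) * indicator {k. 2 powr real_of_int k < a} k
            \<partial>count_space UNIV) \<le> ennreal (a powr r / (1 - 2 powr (- r)))"
proof -
  define k0 where "k0 = \<lceil>log 2 a\<rceil> - 1"
  have levels: "{k::int. 2 powr real_of_int k < a} = {..k0}"
  proof -
    have "2 powr real_of_int k < a \<longleftrightarrow> k \<le> k0" for k
      using two_powr_less_iff_less_ceiling_log[OF a] by (simp add: k0_def)
    then show ?thesis by auto
  qed
  define x where "x = 2 powr (- r)"
  have "2 powr (- r) < 2 powr 0" using r by (intro powr_less_mono) auto
  then have x: "0 < x" "x < 1" by (auto simp: x_def)
  have bij: "bij_betw (\<lambda>j::nat. k0 - int j) UNIV {..k0}"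
    by (rule bij_betwI[where g = "\<lambda>k. nat (k0 - k)"]) auto
  have powers: "2 powr (r * real_of_int (k0 - int j)) = 2 powr (r * real_of_int k0) * x ^ j" for j
  proof -
    have "2 powr (r * real_of_int (k0 - int j)) = 2 powr (r * real_of_int k0 + (- r) * real j)"
      by (simp add: algebra_simps)
    also have "\<dots> = 2 powr (r * real_of_int k0) * (2 powr (- r)) powr real j"
      by (simp only: powr_add powr_powr)
    finally show ?thesis unfolding x_def by (simp add: powr_realpow)
  qed
  have "(\<integral>\<^sup>+k. ennreal (2 powr (r * real_of_int k)) * indicator {k. 2 powr real_of_int k < a} k
            \<partial>count_space UNIV)
      = (\<integral>\<^sup>+k. ennreal (2 powr (r * real_of_int k)) \<partial>count_space {..k0})"
    unfolding levels by (simp add: nn_integral_count_space_indicator)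
  also have "\<dots> = (\<integral>\<^sup>+j. ennreal (2 powr (r * real_of_int (k0 - int j))) \<partial>count_space UNIV)"
    by (rule nn_integral_bij_count_space[OF bij, symmetric])
  also have "\<dots> = (\<Sum>j. ennreal (2 powr (r * real_of_int k0) * x ^ j))"
    unfolding powers by (simp add: nn_integral_count_space_nat)
  also have "\<dots> = ennreal (\<Sum>j. 2 powr (r * real_of_int k0) * x ^ j)"
    using x by (intro suminf_ennreal2) (auto intro!: summable_mult summable_geometric)
  also have "(\<Sum>j. 2 powr (r * real_of_int k0) * x ^ j) = 2 powr (r * real_of_int k0) * (1 / (1 - x))"
    using x by (simp add: suminf_mult[OF summable_geometric] suminf_geometric)
  also have "\<dots> \<le> a powr r / (1 - 2 powr (- r))"
  proof -
    have "2 powr real_of_int k0 < a" using levels by auto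
    then have "(2 powr real_of_int k0) powr r \<le> a powr r"
      using r by (intro powr_mono2) auto
    then have "2 powr (r * real_of_int k0) \<le> a powr r" by (simp add: powr_powr mult.commute)
    then show ?thesis using x by (simp add: x_def divide_right_mono)
  qed
  finally show ?thesis by (simp add: ennreal_leI)
qed

lemma le_nn_integral_count_space: "f k \<le> (\<integral>\<^sup>+j. f j \<partial>count_space UNIV)"
proof -
  have "f k = (\<integral>\<^sup>+j. f j * indicator {k} j \<partial>count_space UNIV)" by simp
  also have "\<dots> \<le> (\<integral>\<^sup>+j. f j \<partial>count_space UNIV)"
    by (intro nn_integral_mono) (simp add: indicator_def)
  finally show ?thesis .
qed

lemma nn_integral_dyadic_infinite:
  fixes g :: "real \<Rightarrow> real"
  assumes mono: "mono_on {0..} g" and pos: "\<And>t. t > 0 \<Longrightarrow> g t > 0"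
  shows "(\<integral>\<^sup>+k. ennreal (g (4 * 2 powr real_of_int k)) \<partial>count_space UNIV) = \<infinity>"
proof -
  have "\<infinity> = ennreal (g 4) * emeasure (count_space UNIV) {k::int. k \<ge> 0}"
    using pos[of 4] infinite_Ici[of "0::int"] by (simp add: atLeast_def ennreal_mult_top)
  also have "\<dots> = (\<integral>\<^sup>+k. ennreal (g 4) * indicator {k::int. k \<ge> 0} k \<partial>count_space UNIV)"
    by (rule nn_integral_cmult_indicator[symmetric]) simp
  also have "\<dots> \<le> (\<integral>\<^sup>+k. ennreal (g (4 * 2 powr real_of_int k)) \<partial>count_space UNIV)"
  proof (intro nn_integral_mono)
    fix k :: int
    have "4 \<le> 4 * 2 powr real_of_int k" if "k \<ge> 0"
      using that ge_one_powr_ge_zero[of 2 "real_of_int k"] by simp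
    then show "ennreal (g 4) * indicator {k. k \<ge> 0} k \<le> ennreal (g (4 * 2 powr real_of_int k))"
      by (auto simp: indicator_def intro!: ennreal_leI mono_onD[OF mono])
  qed
  finally show ?thesis by (simp add: top_unique)
qed

lemma dyadic_term_le:
  fixes \<psi> :: "real \<Rightarrow> real" and K C p q t :: real and k :: int
  assumes K: "K \<ge> 0" and C: "C \<ge> 0" and t: "t > 0" and nonneg: "\<And>u. u > 0 \<Longrightarrow> \<psi> u \<ge> 0"
    and bound: "\<And>u. 0 < u \<Longrightarrow> u < 4 * t \<Longrightarrow> \<psi> u \<le> C * (u / t) powr p * \<psi> t"
  shows "ennreal (K / (2 powr real_of_int k) powr q)
           * ennreal ((if 2 powr real_of_int k < t then t else 0) powr q * \<psi> (4 * 2 powr real_of_int k))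
         \<le> ennreal (K * C * 4 powr p * \<psi> t * t powr (q - p))
           * (ennreal (2 powr ((p - q) * real_of_int k)) * indicator {k. 2 powr real_of_int k < t} k)"
proof (cases "2 powr real_of_int k < t")
  case True
  define A where "A = 2 powr real_of_int k"
  have A: "A > 0" by (simp add: A_def)
  have "K / A powr q * (t powr q * \<psi> (4 * A)) \<le> K / A powr q * (t powr q * (C * (4 * A / t) powr p * \<psi> t))"
    using K True A bound[of "4 * A"] by (intro mult_left_mono) (auto simp: A_def)
  also have "\<dots> = K * C * 4 powr p * \<psi> t * t powr (q - p) * A powr (p - q)"
    using A t by (simp add: powr_diff powr_mult powr_divide field_simps)
  also have "A powr (p - q) = 2 powr ((p - q) * real_of_int k)"
    by (simp add: A_def powr_powr mult.commute)
  finally show ?thesis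
    using True K C A t nonneg[of "4 * A"] nonneg[OF t]
    by (simp add: A_def[symmetric] ennreal_mult[symmetric] ennreal_leI)
qed simp

lemma dyadic_sum_le:
  fixes \<psi> :: "real \<Rightarrow> real" and K C p q t :: real
  assumes K: "K > 0" and C: "C > 0" and qp: "q < p" and nonneg: "\<And>u. u > 0 \<Longrightarrow> \<psi> u \<ge> 0"
    and bound: "\<And>u. 0 < u \<Longrightarrow> u < 4 * t \<Longrightarrow> \<psi> u \<le> C * (u / t) powr p * \<psi> t"
  shows "(\<integral>\<^sup>+k. ennreal (K / (2 powr real_of_int k) powr q)
            * ennreal ((if 2 powr real_of_int k < t then t else 0) powr q * \<psi> (4 * 2 powr real_of_int k))
          \<partial>count_space UNIV) \<le> ennreal (K * C * 4 powr p / (1 - 2 powr (q - p))) * ennreal (\<psi> t)"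
proof (cases "t > 0")
  case True
  define c where "c = K * C * 4 powr p * \<psi> t * t powr (q - p)"
  have "1 - 2 powr (q - p) > 0" using qp by (simp add: powr_less_one)
  have "(\<integral>\<^sup>+k. ennreal (K / (2 powr real_of_int k) powr q)
            * ennreal ((if 2 powr real_of_int k < t then t else 0) powr q * \<psi> (4 * 2 powr real_of_int k))
          \<partial>count_space UNIV)
      \<le> (\<integral>\<^sup>+k. ennreal c * (ennreal (2 powr ((p - q) * real_of_int k)) * indicator {k. 2 powr real_of_int k < t} k)
          \<partial>count_space UNIV)"
    unfolding c_def using K C True nonneg bound by (intro nn_integral_mono dyadic_term_le) auto
  also have "\<dots> = ennreal c * (\<integral>\<^sup>+k. ennreal (2 powr ((p - q) * real_of_int k))
                    * indicator {k. 2 powr real_of_int k < t} k \<partial>count_space UNIV)"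
    by (rule nn_integral_cmult) simp
  also have "\<dots> \<le> ennreal c * ennreal (t powr (p - q) / (1 - 2 powr (- (p - q))))"
    using True qp by (intro mult_left_mono nn_integral_dyadic_powr_le) auto
  also have "\<dots> = ennreal (K * C * 4 powr p / (1 - 2 powr (q - p))) * ennreal (\<psi> t)"
  proof -
    have "t powr (q - p) * t powr (p - q) = 1" using True by (simp add: powr_add[symmetric])
    then have "c * (t powr (p - q) / (1 - 2 powr (- (p - q)))) = K * C * 4 powr p / (1 - 2 powr (q - p)) * \<psi> t"
      by (simp add: c_def mult.assoc)
    then show ?thesis
      using K C True nonneg[OF True] \<open>1 - 2 powr (q - p) > 0\<close>
      by (simp add: ennreal_mult[symmetric] c_def)
  qed
  finally show ?thesis .
next
  case False
  then have "(if 2 powr real_of_int k < t then t else 0) = 0" for k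
    by (smt (verit) powr_gt_zero)
  then show ?thesis by simp
qed

lemma nn_integral_le_via_count_space:
  fixes T R :: "'i::countable \<Rightarrow> 'a \<Rightarrow> ennreal"
  assumes [measurable]: "\<And>k. T k \<in> borel_measurable M" "\<And>k. R k \<in> borel_measurable M"
    and f: "\<And>x. x \<in> space M \<Longrightarrow> f x \<le> (\<integral>\<^sup>+k. T k x \<partial>count_space UNIV)"
    and TR: "\<And>k. (\<integral>\<^sup>+x. T k x \<partial>M) \<le> (\<integral>\<^sup>+x. R k x \<partial>M)"
    and g: "\<And>x. x \<in> space M \<Longrightarrow> (\<integral>\<^sup>+k. R k x \<partial>count_space UNIV) \<le> g x"
  shows "(\<integral>\<^sup>+x. f x \<partial>M) \<le> (\<integral>\<^sup>+x. g x \<partial>M)"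
proof -
  have "(\<integral>\<^sup>+x. f x \<partial>M) \<le> (\<integral>\<^sup>+x. (\<integral>\<^sup>+k. T k x \<partial>count_space UNIV) \<partial>M)"
    using f by (rule nn_integral_mono)
  also have "\<dots> = (\<integral>\<^sup>+k. (\<integral>\<^sup>+x. T k x \<partial>M) \<partial>count_space UNIV)"
    by (rule nn_integral_count_space_nn_integral) auto
  also have "\<dots> \<le> (\<integral>\<^sup>+k. (\<integral>\<^sup>+x. R k x \<partial>M) \<partial>count_space UNIV)"
    using TR by (rule nn_integral_mono)
  also have "\<dots> = (\<integral>\<^sup>+x. (\<integral>\<^sup>+k. R k x \<partial>count_space UNIV) \<partial>M)"
    by (rule nn_integral_count_space_nn_integral[symmetric]) auto
  also have "\<dots> \<le> (\<integral>\<^sup>+x. g x \<partial>M)"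
    using g by (rule nn_integral_mono)
  finally show ?thesis .
qed

text \<open>Unlike \<open>nn_integral_cmult\<close>, no measurability of \<open>f\<close> is needed; this matters because
  \<open>x \<mapsto> \<phi> x (f x)\<close> need not be measurable when \<open>\<phi>\<close> is only measurable in \<open>x\<close> level by level.\<close>
lemma nn_integral_cmult_le:
  fixes c :: real and f :: "'a \<Rightarrow> ennreal"
  assumes c: "c > 0"
  shows "(\<integral>\<^sup>+x. ennreal c * f x \<partial>M) \<le> ennreal c * (\<integral>\<^sup>+x. f x \<partial>M)"
  unfolding nn_integral_def[of M "\<lambda>x. ennreal c * f x"]
proof (rule SUP_least)
  fix g assume g: "g \<in> {g. simple_function M g \<and> g \<le> (\<lambda>x. ennreal c * f x)}"
  define g' where "g' x = ennreal (1 / c) * g x" for x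
  have inv: "ennreal (1 / c) * ennreal c = 1" using c by (simp add: ennreal_mult[symmetric])
  have simple: "simple_function M g'" using g unfolding g'_def by auto
  have "g' \<le> f"
  proof (rule le_funI)
    fix x
    have "g' x \<le> ennreal (1 / c) * (ennreal c * f x)"
      unfolding g'_def using g by (intro mult_left_mono) (auto simp: le_fun_def)
    also have "\<dots> = f x" using inv by (simp add: mult.assoc[symmetric])
    finally show "g' x \<le> f x" .
  qed
  have "g = (\<lambda>x. ennreal c * g' x)"
    using inv by (auto simp: g'_def mult.assoc[symmetric] mult.commute[of "ennreal c"])
  then have "integral\<^sup>S M g = ennreal c * integral\<^sup>S M g'"
    using simple_integral_mult[OF simple] by simp
  also have "integral\<^sup>S M g' \<le> (\<integral>\<^sup>+x. f x \<partial>M)"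
    unfolding nn_integral_def using simple \<open>g' \<le> f\<close> by (intro SUP_upper) auto
  finally show "integral\<^sup>S M g \<le> ennreal c * (\<integral>\<^sup>+x. f x \<partial>M)"
    by (simp add: mult_left_mono)
qed

section \<open>Musielak--Orlicz functions, modulars and Luxemburg norms\<close>

lemma MO_functionD:
  assumes "MO_function M \<phi>"
  shows "x \<in> space M \<Longrightarrow> mono_on {0..} (\<phi> x)"
    and "x \<in> space M \<Longrightarrow> \<phi> x 0 = 0"
    and "x \<in> space M \<Longrightarrow> t \<ge> 0 \<Longrightarrow> \<phi> x t \<ge> 0"
    and "x \<in> space M \<Longrightarrow> t > 0 \<Longrightarrow> \<phi> x t > 0"
    and "t \<ge> 0 \<Longrightarrow> (\<lambda>x. \<phi> x t) \<in> borel_measurable M"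
  using assms unfolding MO_function_def by auto

lemma phi_ext_mono:
  assumes mono: "mono_on {0..} (\<phi> x)" and le: "s \<le> s'"
  shows "phi_ext \<phi> x s \<le> phi_ext \<phi> x s'"
proof (cases "s' = \<infinity>")
  case False
  then have "s \<noteq> \<infinity>" using le by (auto simp: top_unique)
  then have "enn2real s \<le> enn2real s'" using le False by (simp add: enn2real_mono less_top)
  then have "\<phi> x (enn2real s) \<le> \<phi> x (enn2real s')" by (intro mono_onD[OF mono]) auto
  then show ?thesis using False \<open>s \<noteq> \<infinity>\<close> by (simp add: phi_ext_def ennreal_leI)
qed (simp add: phi_ext_def)

lemma phi_ext_le_dyadic_sum:
  assumes mono: "mono_on {0..} (\<phi> x)" and zero: "\<phi> x 0 = 0" and pos: "\<And>t. t > 0 \<Longrightarrow> \<phi> x t > 0"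
  shows "phi_ext \<phi> x s \<le> (\<integral>\<^sup>+k. ennreal (\<phi> x (4 * 2 powr real_of_int k))
            * indicator {k. ennreal (2 * 2 powr real_of_int k) < s} k \<partial>count_space UNIV)"
    (is "_ \<le> ?sum")
proof (cases s)
  case (real t)
  show ?thesis
  proof (cases "t > 0")
    case True
    define k where "k = \<lceil>log 2 t\<rceil> - 2"
    have "2 powr real_of_int (k + 1) < t" "\<not> 2 powr real_of_int (k + 2) < t"
      by (simp_all only: two_powr_less_iff_less_ceiling_log[OF True]) (simp_all add: k_def)
    then have below: "2 * 2 powr real_of_int k < t" and above: "t \<le> 4 * 2 powr real_of_int k"
      by (simp_all add: powr_add)
    have "phi_ext \<phi> x s = ennreal (\<phi> x t)" using real by (simp add: phi_ext_def)
    also have "\<dots> \<le> ennreal (\<phi> x (4 * 2 powr real_of_int k))"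
      using above True by (intro ennreal_leI mono_onD[OF mono]) auto
    also have "\<dots> = ennreal (\<phi> x (4 * 2 powr real_of_int k))
                    * indicator {k. ennreal (2 * 2 powr real_of_int k) < s} k"
      using below real by (simp add: indicator_def ennreal_less_iff)
    also have "\<dots> \<le> ?sum"
      by (rule le_nn_integral_count_space)
    finally show ?thesis .
  next
    case False
    then show ?thesis using real zero by (simp add: phi_ext_def)
  qed
next
  case top
  then have "?sum = (\<integral>\<^sup>+k. ennreal (\<phi> x (4 * 2 powr real_of_int k)) \<partial>count_space UNIV)"
    by simp
  also have "\<dots> = \<infinity>"
    using mono pos by (rule nn_integral_dyadic_infinite)
  finally show ?thesis using top by (simp add: phi_ext_def)
qed

lemma uniform_type_bound:
  assumes MO: "MO_function M \<phi>" and lower: "uniformly_lower_type M \<phi> p"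
    and upper: "uniformly_upper_type M \<phi> P" and p: "p \<ge> 0" and P: "P \<ge> 0"
  obtains C where "C > 0"
    and "\<And>x t u. x \<in> space M \<Longrightarrow> t > 0 \<Longrightarrow> 0 < u \<Longrightarrow> u < 4 * t \<Longrightarrow>
           \<phi> x u \<le> C * (u / t) powr p * \<phi> x t"
proof -
  obtain Cl where Cl: "Cl > 0"
    and low: "\<And>x t s. x \<in> space M \<Longrightarrow> t \<ge> 0 \<Longrightarrow> 0 < s \<Longrightarrow> s < 1 \<Longrightarrow> \<phi> x (s * t) \<le> Cl * s powr p * \<phi> x t"
    using lower unfolding uniformly_lower_type_def by blast
  obtain Cu where Cu: "Cu > 0"
    and up: "\<And>x t s. x \<in> space M \<Longrightarrow> t \<ge> 0 \<Longrightarrow> s \<ge> 1 \<Longrightarrow> \<phi> x (s * t) \<le> Cu * s powr P * \<phi> x t"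
    using upper unfolding uniformly_upper_type_def by blast
  define C where "C = max Cl (Cu * 4 powr P)"
  show ?thesis
  proof (rule that)
    show "C > 0" using Cl by (simp add: C_def)
    fix x and t u :: real assume x: "x \<in> space M" and t: "t > 0" and u: "0 < u" "u < 4 * t"
    define s where "s = u / t"
    have u_eq: "u = s * t" and s: "0 < s" "s < 4" using t u by (simp_all add: s_def field_simps)
    have nonneg: "\<phi> x t \<ge> 0" using MO_functionD(3)[OF MO x] t by simp
    show "\<phi> x u \<le> C * (u / t) powr p * \<phi> x t"
    proof (cases "s < 1")
      case True
      then have "\<phi> x u \<le> Cl * s powr p * \<phi> x t" unfolding u_eq using low x t s by simp
      also have "\<dots> \<le> C * s powr p * \<phi> x t"
        using nonneg by (intro mult_right_mono) (auto simp: C_def)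
      finally show ?thesis by (simp add: s_def)
    next
      case False
      then have "\<phi> x u \<le> Cu * s powr P * \<phi> x t" unfolding u_eq using up x t by simp
      also have "\<dots> \<le> Cu * 4 powr P * \<phi> x t"
        using nonneg Cu s P by (intro mult_right_mono mult_left_mono powr_mono2) auto
      also have "\<dots> \<le> C * s powr p * \<phi> x t"
      proof (intro mult_right_mono[OF _ nonneg])
        have "Cu * 4 powr P \<le> C" by (simp add: C_def)
        also have "C \<le> C * s powr p"
          using Cl False p ge_one_powr_ge_zero[of s p] by (simp add: C_def mult_le_cancel_left1)
        finally show "Cu * 4 powr P \<le> C * s powr p" .
      qed
      finally show ?thesis by (simp add: s_def)
    qed
  qed
qed

lemma MO_modular_lower_type:
  assumes MO: "MO_function M \<phi>" and lower: "uniformly_lower_type M \<phi> p"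
  obtains C where "C > 0"
    and "\<And>f s. 0 < s \<Longrightarrow> s < 1 \<Longrightarrow>
           MO_modular M \<phi> (\<lambda>x. s * f x) \<le> ennreal (C * s powr p) * MO_modular M \<phi> f"
proof -
  obtain C where C: "C > 0"
    and low: "\<And>x t s. x \<in> space M \<Longrightarrow> t \<ge> 0 \<Longrightarrow> 0 < s \<Longrightarrow> s < 1 \<Longrightarrow> \<phi> x (s * t) \<le> C * s powr p * \<phi> x t"
    using lower unfolding uniformly_lower_type_def by blast
  have "MO_modular M \<phi> (\<lambda>x. s * f x) \<le> ennreal (C * s powr p) * MO_modular M \<phi> f"
    if s: "0 < s" "s < 1" for f s
  proof -
    have "MO_modular M \<phi> (\<lambda>x. s * f x) \<le> (\<integral>\<^sup>+x. ennreal (C * s powr p) * ennreal (\<phi> x \<bar>f x\<bar>) \<partial>M)"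
      unfolding MO_modular_def
    proof (rule nn_integral_mono)
      fix x assume x: "x \<in> space M"
      have "\<phi> x \<bar>s * f x\<bar> \<le> C * s powr p * \<phi> x \<bar>f x\<bar>"
        using low[OF x _ s] s by (simp add: abs_mult)
      moreover have "\<phi> x \<bar>f x\<bar> \<ge> 0" using MO_functionD(3)[OF MO x] by simp
      ultimately show "ennreal (\<phi> x \<bar>s * f x\<bar>) \<le> ennreal (C * s powr p) * ennreal (\<phi> x \<bar>f x\<bar>)"
        using C by (simp add: ennreal_mult[symmetric] ennreal_leI)
    qed
    also have "\<dots> \<le> ennreal (C * s powr p) * MO_modular M \<phi> f"
      unfolding MO_modular_def using C s by (intro nn_integral_cmult_le) simp
    finally show ?thesis .
  qed
  with C that show ?thesis by blast
qed

lemma MO_modular_enn2real_le_phi_ext: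
  assumes c: "c > 0"
  shows "MO_modular M \<phi> (\<lambda>x. enn2real (D x) / c) \<le> (\<integral>\<^sup>+x. phi_ext \<phi> x (D x * ennreal (1 / c)) \<partial>M)"
  unfolding MO_modular_def
proof (rule nn_integral_mono)
  fix x
  show "ennreal (\<phi> x \<bar>enn2real (D x) / c\<bar>) \<le> phi_ext \<phi> x (D x * ennreal (1 / c))"
  proof (cases "D x")
    case (real d)
    then have "D x * ennreal (1 / c) = ennreal (d / c)" using c by (simp add: ennreal_mult[symmetric])
    then show ?thesis using real c by (simp add: phi_ext_def)
  qed (use c in \<open>simp add: phi_ext_def ennreal_mult_top\<close>)
qed

lemma AE_less_top_if_nn_integral_phi_ext_finite:
  assumes [measurable]: "D \<in> borel_measurable M"
    and finite: "(\<integral>\<^sup>+x. phi_ext \<phi> x (D x) \<partial>M) \<noteq> \<infinity>"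
  shows "AE x in M. D x < \<infinity>"
proof -
  have "(\<integral>\<^sup>+x. \<infinity> * indicator {x. D x = \<infinity>} x \<partial>M) \<le> (\<integral>\<^sup>+x. phi_ext \<phi> x (D x) \<partial>M)"
    by (intro nn_integral_mono) (simp add: phi_ext_def indicator_def)
  then have "(\<integral>\<^sup>+x. \<infinity> * indicator {x. D x = \<infinity>} x \<partial>M) \<noteq> \<infinity>"
    using finite by (auto simp: top_unique)
  then have "AE x in M. \<infinity> * indicator {x. D x = \<infinity>} x \<noteq> (\<infinity> :: ennreal)"
    by (intro nn_integral_PInf_AE) measurable
  then show ?thesis
  proof eventually_elim
    case (elim x)
    then show ?case by (cases "D x = \<infinity>") (auto simp: less_top)
  qed
qed

lemma L_phi_norm_le_if_modular_le:
  assumes B: "B > 0" and f: "\<exists>c>0. MO_modular M \<phi> (\<lambda>x. f x / c) \<le> 1"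
    and le: "\<And>c. c > 0 \<Longrightarrow> MO_modular M \<phi> (\<lambda>x. f x / c) \<le> 1 \<Longrightarrow> MO_modular M \<phi> (\<lambda>x. g x / (B * c)) \<le> 1"
  shows "L_phi_norm M \<phi> g \<le> B * L_phi_norm M \<phi> f"
proof -
  define Sf where "Sf = {c. c > 0 \<and> MO_modular M \<phi> (\<lambda>x. f x / c) \<le> 1}"
  define Sg where "Sg = {c. c > 0 \<and> MO_modular M \<phi> (\<lambda>x. g x / c) \<le> 1}"
  have "Inf Sg / B \<le> c" if "c \<in> Sf" for c
  proof -
    have "B * c \<in> Sg" using that le B by (auto simp: Sf_def Sg_def)
    then have "Inf Sg \<le> B * c" by (intro cInf_lower bdd_belowI[of _ 0]) (auto simp: Sg_def)
    then show ?thesis using B by (simp add: field_simps)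
  qed
  then have "Inf Sg / B \<le> Inf Sf" using f by (intro cInf_greatest) (auto simp: Sf_def)
  then show ?thesis using B by (simp add: L_phi_norm_def Sf_def Sg_def field_simps)
qed

lemma modular_inequality_dilation:
  fixes T :: "('a \<Rightarrow> real) \<Rightarrow> 'a \<Rightarrow> ennreal"
  assumes MO: "MO_function M \<phi>" and lower: "uniformly_lower_type M \<phi> p" and p: "p > 0"
    and C: "C > 0"
    and modular: "\<And>f c. f \<in> borel_measurable M \<Longrightarrow> c > 0 \<Longrightarrow>
       (\<integral>\<^sup>+x. phi_ext \<phi> x (T f x * ennreal (1 / c)) \<partial>M) \<le> ennreal C * MO_modular M \<phi> (\<lambda>x. f x / c)"
  obtains B where "B > 1"
    and "\<And>f c. f \<in> borel_measurable M \<Longrightarrow> c > 0 \<Longrightarrow> MO_modular M \<phi> (\<lambda>x. f x / c) \<le> 1 \<Longrightarrow>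
           MO_modular M \<phi> (\<lambda>x. enn2real (T f x) / (B * c)) \<le> 1"
proof -
  obtain Cl where Cl: "Cl > 0" and scale: "\<And>f s. 0 < s \<Longrightarrow> s < 1 \<Longrightarrow>
      MO_modular M \<phi> (\<lambda>x. s * f x) \<le> ennreal (Cl * s powr p) * MO_modular M \<phi> f"
    using MO_modular_lower_type[OF MO lower] by blast
  text \<open>Dilating by \<open>B\<close> gains the factor \<open>B\<^sup>-\<^sup>p\<close> from the lower type, which absorbs \<open>C\<close>.\<close>
  define B where "B = max 2 ((C * Cl) powr (1 / p))"
  have B: "B > 1" by (simp add: B_def)
  have small: "C * (Cl * (1 / B) powr p) \<le> 1"
  proof -
    have "C * Cl = ((C * Cl) powr (1 / p)) powr p" using C Cl p by (simp add: powr_powr)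
    also have "\<dots> \<le> B powr p" using p by (intro powr_mono2) (auto simp: B_def)
    finally have "C * Cl * (1 / B) powr p \<le> B powr p * (1 / B) powr p"
      by (rule mult_right_mono) simp
    also have "\<dots> = 1" using B by (simp add: powr_mult[symmetric])
    finally show ?thesis by (simp add: mult.assoc)
  qed
  have dilate: "MO_modular M \<phi> (\<lambda>x. enn2real (T f x) / (B * c)) \<le> 1"
    if f: "f \<in> borel_measurable M" and c: "c > 0" and unit: "MO_modular M \<phi> (\<lambda>x. f x / c) \<le> 1" for f c
  proof -
    have "MO_modular M \<phi> (\<lambda>x. enn2real (T f x) / (B * c))
        \<le> (\<integral>\<^sup>+x. phi_ext \<phi> x (T f x * ennreal (1 / (B * c))) \<partial>M)"
      using B c by (intro MO_modular_enn2real_le_phi_ext) simp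
    also have "\<dots> \<le> ennreal C * MO_modular M \<phi> (\<lambda>x. (1 / B) * (f x / c))"
      using modular[OF f, of "B * c"] B c by simp
    also have "\<dots> \<le> ennreal C * (ennreal (Cl * (1 / B) powr p) * MO_modular M \<phi> (\<lambda>x. f x / c))"
      using B by (intro mult_left_mono scale) auto
    also have "\<dots> \<le> ennreal (C * (Cl * (1 / B) powr p))"
      using unit C Cl mult_left_mono[OF unit, of "ennreal (Cl * (1 / B) powr p)"]
      by (simp add: ennreal_mult mult_left_mono)
    also have "\<dots> \<le> 1" using small by (simp add: ennreal_le_1)
    finally show ?thesis .
  qed
  with B that show ?thesis by blast
qed

lemma L_phi_bounded_if_modular_inequality:
  fixes T :: "('a \<Rightarrow> real) \<Rightarrow> 'a \<Rightarrow> ennreal"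
  assumes MO: "MO_function M \<phi>" and lower: "uniformly_lower_type M \<phi> p" and p: "p > 0"
    and T_measurable: "\<And>f. f \<in> borel_measurable M \<Longrightarrow> T f \<in> borel_measurable M"
    and C: "C > 0"
    and modular: "\<And>f c. f \<in> borel_measurable M \<Longrightarrow> c > 0 \<Longrightarrow>
       (\<integral>\<^sup>+x. phi_ext \<phi> x (T f x * ennreal (1 / c)) \<partial>M) \<le> ennreal C * MO_modular M \<phi> (\<lambda>x. f x / c)"
  shows "\<exists>C>0. \<forall>f. in_L_phi M \<phi> f \<longrightarrow>
            (AE x in M. T f x < \<infinity>)
          \<and> in_L_phi M \<phi> (\<lambda>x. enn2real (T f x))
          \<and> L_phi_norm M \<phi> (\<lambda>x. enn2real (T f x)) \<le> C * L_phi_norm M \<phi> f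
          \<and> (\<integral>\<^sup>+ x. phi_ext \<phi> x (T f x) \<partial>M) \<le> ennreal C * MO_modular M \<phi> f"
proof -
  obtain B where B: "B > 1" and dilate: "\<And>f c. f \<in> borel_measurable M \<Longrightarrow> c > 0 \<Longrightarrow>
      MO_modular M \<phi> (\<lambda>x. f x / c) \<le> 1 \<Longrightarrow> MO_modular M \<phi> (\<lambda>x. enn2real (T f x) / (B * c)) \<le> 1"
    using modular_inequality_dilation[OF MO lower p C modular] by blast
  show ?thesis
  proof (intro exI[of _ "max C B"] conjI allI impI)
    show "max C B > 0" using C by simp
    fix f assume inL: "in_L_phi M \<phi> f"
    then have f: "f \<in> borel_measurable M" and unit: "\<exists>c>0. MO_modular M \<phi> (\<lambda>x. f x / c) \<le> 1"
      unfolding in_L_phi_def by auto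
    then obtain c where c: "c > 0" "MO_modular M \<phi> (\<lambda>x. f x / c) \<le> 1" by blast
    have [measurable]: "T f \<in> borel_measurable M" using T_measurable[OF f] .
    have "(\<integral>\<^sup>+x. phi_ext \<phi> x (T f x * ennreal (1 / c)) \<partial>M) \<le> ennreal C * MO_modular M \<phi> (\<lambda>x. f x / c)"
      by (rule modular[OF f c(1)])
    also have "\<dots> \<le> ennreal C * 1" by (intro mult_left_mono c(2)) simp
    finally have "(\<integral>\<^sup>+x. phi_ext \<phi> x (T f x * ennreal (1 / c)) \<partial>M) \<noteq> \<infinity>"
      by (metis ennreal_less_top infinity_ennreal_def le_less_trans less_irrefl mult_1_right)
    then have "AE x in M. T f x * ennreal (1 / c) < \<infinity>"
      by (rule AE_less_top_if_nn_integral_phi_ext_finite[rotated]) simp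
    then show "AE x in M. T f x < \<infinity>"
      by eventually_elim (use c(1) in \<open>auto simp: ennreal_mult_less_top\<close>)
    show "in_L_phi M \<phi> (\<lambda>x. enn2real (T f x))"
      unfolding in_L_phi_def using c dilate[OF f c] B by (intro conjI exI[of _ "B * c"]) auto
    have "L_phi_norm M \<phi> (\<lambda>x. enn2real (T f x)) \<le> B * L_phi_norm M \<phi> f"
      using B unit dilate[OF f] by (intro L_phi_norm_le_if_modular_le) auto
    moreover have "L_phi_norm M \<phi> f \<ge> 0"
      using unit unfolding L_phi_norm_def by (intro cInf_greatest) auto
    ultimately show "L_phi_norm M \<phi> (\<lambda>x. enn2real (T f x)) \<le> max C B * L_phi_norm M \<phi> f"
      by (meson max.cobounded2 mult_right_mono order_trans)
    have "(\<integral>\<^sup>+ x. phi_ext \<phi> x (T f x) \<partial>M) \<le> ennreal C * MO_modular M \<phi> f"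
      using modular[OF f, of 1] by simp
    also have "\<dots> \<le> ennreal (max C B) * MO_modular M \<phi> f"
      by (intro mult_right_mono ennreal_leI) auto
    finally show "(\<integral>\<^sup>+ x. phi_ext \<phi> x (T f x) \<partial>M) \<le> ennreal (max C B) * MO_modular M \<phi> f" .
  qed
qed

section \<open>Conditional expectations against \<open>A\<^sub>q\<close> weights\<close>

lemma one_le_q_index:
  assumes "mart_Ainf M F \<phi>"
  shows "q_index M F \<phi> \<ge> 1"
  using assms unfolding mart_Ainf_def q_index_def by (intro cInf_greatest) auto

lemma young_weighted_le:
  fixes h w c q :: real
  assumes h: "h \<ge> 0" and w: "w > 0" and c: "c > 0" and q: "q > 1"
  shows "h \<le> c powr (1 - q) * (h powr q * w) + c * w powr (- 1 / (q - 1))"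
proof (cases "h \<le> c * w powr (- 1 / (q - 1))")
  case True
  have "0 \<le> c powr (1 - q) * (h powr q * w)" using w by simp
  then show ?thesis using True by linarith
next
  case False
  then have hc: "h / c > w powr (- 1 / (q - 1))" using c by (simp add: field_simps)
  have h_pos: "h > 0" using False c w by (smt (verit) mult_pos_pos powr_gt_zero)
  have "(w powr (- 1 / (q - 1))) powr (q - 1) = 1 / w"
  proof -
    have "(w powr (- 1 / (q - 1))) powr (q - 1) = w powr ((- 1 / (q - 1)) * (q - 1))"
      by (rule powr_powr)
    also have "\<dots> = w powr (- 1)" using q by simp
    also have "\<dots> = 1 / w" using w by (simp add: powr_minus divide_inverse)
    finally show ?thesis .
  qed
  moreover have "(w powr (- 1 / (q - 1))) powr (q - 1) < (h / c) powr (q - 1)"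
    using hc q by (intro powr_less_mono2) auto
  ultimately have "1 / w < (h / c) powr (q - 1)" by simp
  then have "1 < w * (h / c) powr (q - 1)" using w by (simp add: field_simps)
  then have "h < h * (w * (h / c) powr (q - 1))"
    using mult_strict_left_mono[of 1 _ h] h_pos by simp
  also have "\<dots> = c powr (1 - q) * (h powr q * w)"
  proof -
    have "h powr q = h * h powr (q - 1)" using h_pos by (simp add: powr_diff)
    moreover have "c powr (1 - q) = 1 / c powr (q - 1)"
      using c by (metis minus_diff_eq powr_minus_divide)
    ultimately show ?thesis using h_pos c by (simp add: powr_divide)
  qed
  finally show ?thesis using c w by (smt (verit) mult_nonneg_nonneg powr_ge_zero)
qed

lemma A1_level_bound:
  fixes W H U :: ennreal and K lam :: real
  assumes K: "K > 0" and lam: "lam > 0" and level: "ennreal lam < H" and WH: "W * H \<le> ennreal K * U"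
  shows "W \<le> ennreal (K / lam) * U"
proof -
  have "ennreal lam * W \<le> ennreal K * U"
    using level WH by (metis mult.commute mult_right_mono order.strict_implies_order order_trans zero_le)
  then have "ennreal (1 / lam) * (ennreal lam * W) \<le> ennreal (1 / lam) * (ennreal K * U)"
    by (rule mult_left_mono) simp
  moreover have "ennreal (1 / lam) * ennreal lam = 1" using lam by (simp add: ennreal_mult[symmetric])
  ultimately show ?thesis
    using lam K by (simp add: ennreal_mult[symmetric] mult.assoc[symmetric])
qed

text \<open>In the \<open>A\<^sub>q\<close> case the level \<open>\<lambda> < H\<close> is split by Young's inequality with the
  parameter \<open>c = \<lambda> / (2 \<sigma>)\<close>, where \<open>\<sigma>\<close> is the conditional mean of the dual weight
  \<open>w\<^sup>-\<^sup>1\<^sup>/\<^sup>(\<^sup>q\<^sup>-\<^sup>1\<^sup>)\<close>; half of the level is then carried by \<open>U = \<bbbE>(h\<^sup>q w)\<close>.\<close>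
lemma Aq_level_bound_real:
  fixes q K lam s u om :: real
  assumes q: "q > 1" and K: "K > 0" and lam: "lam > 0" and s: "s > 0" and u: "u \<ge> 0"
    and om: "om * s powr (q - 1) \<le> K"
    and level: "lam < (lam / (2 * s)) powr (1 - q) * u + lam / 2"
  shows "om \<le> 2 powr q * K / lam powr q * u"
proof -
  define c where "c = lam / (2 * s)"
  have c: "c > 0" using lam s by (simp add: c_def)
  have "lam / 2 < c powr (1 - q) * u" using level by (simp add: c_def)
  then have "lam / 2 * c powr (q - 1) < c powr (1 - q) * u * c powr (q - 1)"
    using c by (intro mult_strict_right_mono) auto
  also have "\<dots> = u" using c by (simp add: powr_add[symmetric] mult.commute mult.left_commute)
  also have "lam / 2 * c powr (q - 1) = lam powr q / 2 powr q / s powr (q - 1)"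
  proof -
    have "c powr (q - 1) = (lam / 2) powr (q - 1) / s powr (q - 1)"
      using lam s by (simp add: c_def powr_divide powr_mult)
    moreover have "lam / 2 * (lam / 2) powr (q - 1) = (lam / 2) powr q"
      using lam by (simp add: powr_diff)
    ultimately have "lam / 2 * c powr (q - 1) = (lam / 2) powr q / s powr (q - 1)"
      by (simp add: field_simps)
    moreover have "(lam / 2) powr q = lam powr q / 2 powr q" using lam by (simp add: powr_divide)
    ultimately show ?thesis by simp
  qed
  finally have u_bound: "lam powr q / 2 powr q / s powr (q - 1) < u" .
  have "om \<le> K / s powr (q - 1)" using om s by (simp add: field_simps)
  also have "\<dots> = 2 powr q * K / lam powr q * (lam powr q / 2 powr q / s powr (q - 1))"
    using lam by (simp add: field_simps)
  also have "\<dots> \<le> 2 powr q * K / lam powr q * u"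
    using u_bound K lam by (intro mult_left_mono) auto
  finally show ?thesis .
qed

lemma Aq_level_bound:
  fixes W \<sigma> U H :: ennreal and q K lam c :: real
  assumes q: "q > 1" and K: "K > 0" and lam: "lam > 0" and W: "W > 0" and \<sigma>: "\<sigma> > 0"
    and Aq: "W * enn_powr \<sigma> (q - 1) \<le> ennreal K"
    and c: "\<sigma> \<noteq> \<infinity> \<Longrightarrow> c = lam / (2 * enn2real \<sigma>)"
    and young: "H \<le> ennreal (c powr (1 - q)) * U + ennreal c * \<sigma>"
    and level: "ennreal lam < H"
  shows "W \<le> ennreal (2 powr q * K / lam powr q) * U"
proof -
  have "\<sigma> \<noteq> \<infinity>"
    using Aq W by (auto simp: enn_powr_def ennreal_mult_eq_top_iff top_unique)
  then obtain s where s: "\<sigma> = ennreal s" "s > 0"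
    using \<sigma> by (cases \<sigma>) auto
  have cs: "c = lam / (2 * s)" using c s by simp
  have "W * ennreal (s powr (q - 1)) \<le> ennreal K" using Aq s by (simp add: enn_powr_def)
  moreover have "s powr (q - 1) > 0" using s by simp
  ultimately have "W \<noteq> \<infinity>" by (auto simp: ennreal_mult_eq_top_iff top_unique)
  then obtain om where om: "W = ennreal om" "om \<ge> 0" by (cases W) auto
  have om_bound: "om * s powr (q - 1) \<le> K"
    using Aq om s K by (simp add: enn_powr_def ennreal_mult''[symmetric] ennreal_le_iff)
  have CK: "2 powr q * K / lam powr q > 0" using K lam by simp
  show ?thesis
  proof (cases U)
    case (real u)
    have "ennreal c * \<sigma> = ennreal (lam / 2)"
      using cs s lam by (simp add: ennreal_mult''[symmetric])
    then have "ennreal lam < ennreal (c powr (1 - q) * u + lam / 2)"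
      using level young real lam by (simp add: ennreal_mult ennreal_plus)
    then have "lam < c powr (1 - q) * u + lam / 2"
      using lam by (subst (asm) ennreal_less_iff) auto
    then have "om \<le> 2 powr q * K / lam powr q * u"
      using Aq_level_bound_real[OF q K lam s(2) real(1) om_bound] cs by simp
    then show ?thesis using om real CK by (simp add: ennreal_mult[symmetric] ennreal_leI)
  qed (use CK K lam in \<open>simp add: ennreal_mult_top\<close>)
qed

context sigma_finite_subalgebra
begin

lemma nn_cond_exp_pos:
  assumes [measurable]: "v \<in> borel_measurable M" and pos: "\<And>x. x \<in> space M \<Longrightarrow> v x > 0"
  shows "AE x in M. nn_cond_exp M F v x > 0"
proof -
  define A where "A = {x\<in>space M. nn_cond_exp M F v x = 0}"
  have space: "space F = space M" using subalg unfolding subalgebra_def by simp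
  have A_F: "A \<in> sets F"
    unfolding A_def space[symmetric] by measurable
  then have [measurable]: "A \<in> sets M" using subalg unfolding subalgebra_def by auto
  have "(\<integral>\<^sup>+ x. indicator A x * v x \<partial>M) = (\<integral>\<^sup>+ x. indicator A x * nn_cond_exp M F v x \<partial>M)"
    using A_F by (intro nn_cond_exp_intg[symmetric]) auto
  also have "\<dots> = 0"
    by (intro nn_integral_zero' AE_I2) (simp add: A_def indicator_def)
  finally have "AE x in M. indicator A x * v x = 0"
    by (subst (asm) nn_integral_0_iff_AE) measurable
  then show ?thesis using AE_space
    by eventually_elim (use pos in \<open>auto simp: A_def indicator_def zero_less_iff_neq_zero split: if_splits\<close>)
qed

lemma nn_cond_exp_le_truncation:
  fixes h :: "'a \<Rightarrow> real"
  assumes [measurable]: "h \<in> borel_measurable M"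
  shows "AE x in M. nn_cond_exp M F (\<lambda>y. ennreal (h y)) x
           \<le> nn_cond_exp M F (\<lambda>y. ennreal (if lam < h y then h y else 0)) x + ennreal lam"
proof -
  have "AE x in M. nn_cond_exp M F (\<lambda>y. ennreal (h y)) x
      \<le> nn_cond_exp M F (\<lambda>y. ennreal (if lam < h y then h y else 0) + ennreal lam) x"
    by (intro nn_cond_exp_mono AE_I2) (auto intro: ennreal_leI)
  moreover have "AE x in M. nn_cond_exp M F (\<lambda>y. ennreal (if lam < h y then h y else 0)) x
        + nn_cond_exp M F (\<lambda>y. ennreal lam) x
      = nn_cond_exp M F (\<lambda>y. ennreal (if lam < h y then h y else 0) + ennreal lam) x"
    by (rule nn_cond_exp_sum) measurable
  moreover have "AE x in M. ennreal lam = nn_cond_exp M F (\<lambda>y. ennreal lam) x"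
    by (rule nn_cond_exp_F_meas) simp
  ultimately show ?thesis by eventually_elim simp
qed

lemma nn_cond_exp_weight_le_A1:
  fixes w h :: "'a \<Rightarrow> real" and K lam :: real
  assumes K: "K > 0" and lam: "lam > 0"
    and [measurable]: "w \<in> borel_measurable M" "h \<in> borel_measurable M"
    and w: "\<And>x. x \<in> space M \<Longrightarrow> w x > 0" and h: "\<And>x. x \<in> space M \<Longrightarrow> h x \<ge> 0"
    and A1: "AE x in M. nn_cond_exp M F (\<lambda>y. ennreal (w y)) x \<le> ennreal K * ennreal (w x)"
  shows "AE x in M. ennreal lam < nn_cond_exp M F (\<lambda>y. ennreal (h y)) x \<longrightarrow>
           nn_cond_exp M F (\<lambda>y. ennreal (w y)) x
             \<le> ennreal (K / lam) * nn_cond_exp M F (\<lambda>y. ennreal (h y * w y)) x"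
proof -
  define W where "W = nn_cond_exp M F (\<lambda>y. ennreal (w y))"
  have [measurable]: "W \<in> borel_measurable F" unfolding W_def by measurable
  have [measurable]: "W \<in> borel_measurable M" by (rule measurable_from_subalg[OF subalg]) measurable
  have "AE y in M. W y * ennreal (h y) \<le> ennreal K * ennreal (h y * w y)"
    using A1 AE_space
  proof eventually_elim
    case (elim y)
    then have "W y * ennreal (h y) \<le> ennreal K * ennreal (w y) * ennreal (h y)"
      unfolding W_def by (intro mult_right_mono) simp_all
    then show ?case using h[of y] w[of y] elim(2) by (simp add: ennreal_mult ac_simps)
  qed
  then have "AE x in M. nn_cond_exp M F (\<lambda>y. W y * ennreal (h y)) x
      \<le> nn_cond_exp M F (\<lambda>y. ennreal K * ennreal (h y * w y)) x"
    by (rule nn_cond_exp_mono) measurable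
  moreover have "AE x in M. W x * nn_cond_exp M F (\<lambda>y. ennreal (h y)) x
      = nn_cond_exp M F (\<lambda>y. W y * ennreal (h y)) x"
    by (rule nn_cond_exp_prod) measurable
  moreover have "AE x in M. ennreal K * nn_cond_exp M F (\<lambda>y. ennreal (h y * w y)) x
      = nn_cond_exp M F (\<lambda>y. ennreal K * ennreal (h y * w y)) x"
    by (rule nn_cond_exp_prod) measurable
  ultimately show ?thesis
    unfolding W_def[symmetric] by eventually_elim (auto intro: A1_level_bound[OF K lam])
qed

lemma nn_cond_exp_young_le:
  fixes w h c :: "'a \<Rightarrow> real" and q :: real
  assumes q: "q > 1"
    and [measurable]: "w \<in> borel_measurable M" "h \<in> borel_measurable M" "c \<in> borel_measurable F"
    and w: "\<And>x. x \<in> space M \<Longrightarrow> w x > 0" and h: "\<And>x. x \<in> space M \<Longrightarrow> h x \<ge> 0"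
    and c: "\<And>x. c x > 0"
  shows "AE x in M. nn_cond_exp M F (\<lambda>y. ennreal (h y)) x
           \<le> ennreal (c x powr (1 - q)) * nn_cond_exp M F (\<lambda>y. ennreal (h y powr q * w y)) x
             + ennreal (c x) * nn_cond_exp M F (\<lambda>y. ennreal (w y powr (- 1 / (q - 1)))) x"
proof -
  have [measurable]: "c \<in> borel_measurable M" by (rule measurable_from_subalg[OF subalg]) measurable
  define g1 where "g1 y = ennreal (c y powr (1 - q)) * ennreal (h y powr q * w y)" for y
  define g2 where "g2 y = ennreal (c y) * ennreal (w y powr (- 1 / (q - 1)))" for y
  have [measurable]: "g1 \<in> borel_measurable M" "g2 \<in> borel_measurable M"
    unfolding g1_def g2_def by measurable
  have "ennreal (h y) \<le> g1 y + g2 y" if y: "y \<in> space M" for y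
  proof -
    have "h y \<le> c y powr (1 - q) * (h y powr q * w y) + c y * w y powr (- 1 / (q - 1))"
      by (rule young_weighted_le[OF h[OF y] w[OF y] c q])
    then have "ennreal (h y) \<le> ennreal (c y powr (1 - q) * (h y powr q * w y) + c y * w y powr (- 1 / (q - 1)))"
      by (rule ennreal_leI)
    also have "\<dots> = g1 y + g2 y"
      unfolding g1_def g2_def using c[of y] h[OF y] w[OF y] by (simp add: ennreal_plus ennreal_mult)
    finally show ?thesis .
  qed
  then have "AE x in M. nn_cond_exp M F (\<lambda>y. ennreal (h y)) x \<le> nn_cond_exp M F (\<lambda>y. g1 y + g2 y) x"
    by (intro nn_cond_exp_mono AE_I2) auto
  moreover have "AE x in M. nn_cond_exp M F g1 x + nn_cond_exp M F g2 x = nn_cond_exp M F (\<lambda>y. g1 y + g2 y) x"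
    by (rule nn_cond_exp_sum) measurable
  moreover have "AE x in M. ennreal (c x powr (1 - q)) * nn_cond_exp M F (\<lambda>y. ennreal (h y powr q * w y)) x
        = nn_cond_exp M F g1 x"
    unfolding g1_def by (rule nn_cond_exp_prod) measurable
  moreover have "AE x in M. ennreal (c x) * nn_cond_exp M F (\<lambda>y. ennreal (w y powr (- 1 / (q - 1)))) x
        = nn_cond_exp M F g2 x"
    unfolding g2_def by (rule nn_cond_exp_prod) measurable
  ultimately show ?thesis by eventually_elim simp
qed

lemma nn_cond_exp_weight_le_Aq:
  fixes w h :: "'a \<Rightarrow> real" and q K lam :: real
  assumes q: "q > 1" and K: "K > 0" and lam: "lam > 0"
    and [measurable]: "w \<in> borel_measurable M" "h \<in> borel_measurable M"
    and w: "\<And>x. x \<in> space M \<Longrightarrow> w x > 0" and h: "\<And>x. x \<in> space M \<Longrightarrow> h x \<ge> 0"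
    and Aq: "AE x in M. nn_cond_exp M F (\<lambda>y. ennreal (w y)) x
              * enn_powr (nn_cond_exp M F (\<lambda>y. ennreal (w y powr (- 1 / (q - 1)))) x) (q - 1) \<le> ennreal K"
  shows "AE x in M. ennreal lam < nn_cond_exp M F (\<lambda>y. ennreal (h y)) x \<longrightarrow>
           nn_cond_exp M F (\<lambda>y. ennreal (w y)) x
             \<le> ennreal (2 powr q * K / lam powr q) * nn_cond_exp M F (\<lambda>y. ennreal (h y powr q * w y)) x"
proof -
  define \<sigma> where "\<sigma> = nn_cond_exp M F (\<lambda>y. ennreal (w y powr (- 1 / (q - 1))))"
  text \<open>The junk value \<open>1\<close> keeps \<open>c\<close> positive where \<open>\<sigma>\<close> is \<open>0\<close> or \<open>\<infinity>\<close>.\<close>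
  define c where "c y = (if \<sigma> y \<noteq> 0 \<and> \<sigma> y \<noteq> \<infinity> then lam / (2 * enn2real (\<sigma> y)) else 1)" for y
  have [measurable]: "c \<in> borel_measurable F" unfolding c_def \<sigma>_def by measurable
  have c_pos: "c y > 0" for y
    using lam by (auto simp: c_def enn2real_positive_iff less_top[symmetric] zero_less_iff_neq_zero)
  have "AE x in M. nn_cond_exp M F (\<lambda>y. ennreal (h y)) x
           \<le> ennreal (c x powr (1 - q)) * nn_cond_exp M F (\<lambda>y. ennreal (h y powr q * w y)) x + ennreal (c x) * \<sigma> x"
    unfolding \<sigma>_def using w h c_pos by (intro nn_cond_exp_young_le[OF q]) auto
  moreover have "AE x in M. nn_cond_exp M F (\<lambda>y. ennreal (w y)) x > 0"
    using w by (intro nn_cond_exp_pos) auto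
  moreover have "AE x in M. \<sigma> x > 0"
    unfolding \<sigma>_def using w by (intro nn_cond_exp_pos) (auto simp: less_le)
  ultimately show ?thesis
    using Aq unfolding \<sigma>_def[symmetric]
  proof eventually_elim
    case (elim x)
    show ?case
    proof
      assume "ennreal lam < nn_cond_exp M F (\<lambda>y. ennreal (h y)) x"
      then show "nn_cond_exp M F (\<lambda>y. ennreal (w y)) x
          \<le> ennreal (2 powr q * K / lam powr q) * nn_cond_exp M F (\<lambda>y. ennreal (h y powr q * w y)) x"
        using elim by (intro Aq_level_bound[OF q K lam, where c = "c x"]) (auto simp: c_def)
    qed
  qed
qed

end

section \<open>The Doob maximal operator\<close>

definition nn_doob_max :: "'a measure \<Rightarrow> (nat \<Rightarrow> 'a measure) \<Rightarrow> ('a \<Rightarrow> ennreal) \<Rightarrow> 'a \<Rightarrow> ennreal" where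
  "nn_doob_max M F h x = (SUP n. nn_cond_exp M (F n) h x)"

definition uniform_weak_type :: "'a measure \<Rightarrow> (nat \<Rightarrow> 'a measure) \<Rightarrow> ('a \<Rightarrow> real \<Rightarrow> real) \<Rightarrow> real \<Rightarrow> real \<Rightarrow> bool" where
  "uniform_weak_type M F \<phi> q K \<longleftrightarrow>
     (\<forall>t>0. \<forall>lam>0. \<forall>h\<in>borel_measurable M. (\<forall>x\<in>space M. h x \<ge> 0) \<longrightarrow>
        (\<integral>\<^sup>+x. ennreal (\<phi> x t) * indicator {x\<in>space M. ennreal lam < nn_doob_max M F (\<lambda>y. ennreal (h y)) x} x \<partial>M)
          \<le> ennreal (K / lam powr q) * (\<integral>\<^sup>+x. ennreal (h x powr q * \<phi> x t) \<partial>M))"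

locale prob_filtration = prob_space M for M :: "'a measure" +
  fixes F :: "nat \<Rightarrow> 'a measure"
  assumes subalgebra_F: "\<And>n. subalgebra M (F n)"
    and sets_F_mono: "\<And>m n. m \<le> n \<Longrightarrow> sets (F m) \<subseteq> sets (F n)"
begin

lemma sigma_finite_subalgebra_F: "sigma_finite_subalgebra M (F n)"
proof -
  have "finite_measure_subalgebra M (F n)"
    by unfold_locales (rule subalgebra_F)
  then show ?thesis by (rule finite_measure_subalgebra_is_sigma_finite)
qed

lemma space_F: "space (F n) = space M"
  using subalgebra_F unfolding subalgebra_def by simp

lemma borel_measurable_nn_doob_max [measurable]: "nn_doob_max M F h \<in> borel_measurable M"
  unfolding nn_doob_max_def by measurable

text \<open>\<open>B n\<close> is the set where \<open>\<bbbE>\<^sub>n h\<close> first exceeds \<open>\<lambda>\<close>.\<close>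
lemma doob_level_set_decomposition:
  obtains B where "\<And>n. B n \<in> sets (F n)" and "disjoint_family B"
    and "{x\<in>space M. lam < nn_doob_max M F h x} = (\<Union>n. B n)"
    and "\<And>n x. x \<in> B n \<Longrightarrow> lam < nn_cond_exp M (F n) h x"
proof
  define S where "S n = {x\<in>space M. lam < nn_cond_exp M (F n) h x}" for n
  define B where "B n = S n - (\<Union>m<n. S m)" for n
  have S_F: "S m \<in> sets (F n)" if "m \<le> n" for m n
  proof -
    have "S m \<in> sets (F m)" unfolding S_def space_F[symmetric, of m] by measurable
    then show ?thesis using sets_F_mono[OF that] by auto
  qed
  show "B n \<in> sets (F n)" for n
    unfolding B_def by (intro sets.Diff sets.finite_UN S_F) auto
  show "disjoint_family B"
    unfolding disjoint_family_on_def
  proof (intro ballI impI)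
    fix m n :: nat assume "m \<noteq> n"
    then show "B m \<inter> B n = {}" unfolding B_def by (cases "m < n") auto
  qed
  have "x \<in> (\<Union>n. B n)" if "x \<in> S n" for x n
  proof -
    define m where "m = (LEAST n. x \<in> S n)"
    have "x \<in> S m" unfolding m_def using that by (rule LeastI)
    moreover have "x \<notin> S k" if "k < m" for k
      using not_less_Least[of k "\<lambda>n. x \<in> S n"] that unfolding m_def by blast
    ultimately show ?thesis unfolding B_def by blast
  qed
  then show "{x\<in>space M. lam < nn_doob_max M F h x} = (\<Union>n. B n)"
    by (auto simp: nn_doob_max_def less_SUP_iff S_def B_def)
  show "lam < nn_cond_exp M (F n) h x" if "x \<in> B n" for n x
    using that by (simp add: B_def S_def)
qed

lemma nn_integral_weight_doob_level_le:
  fixes w h g :: "'a \<Rightarrow> ennreal"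
  assumes [measurable]: "w \<in> borel_measurable M" "h \<in> borel_measurable M" "g \<in> borel_measurable M"
    and level: "\<And>n. AE x in M. lam < nn_cond_exp M (F n) h x \<longrightarrow>
                      nn_cond_exp M (F n) w x \<le> C * nn_cond_exp M (F n) g x"
  shows "(\<integral>\<^sup>+x. w x * indicator {x\<in>space M. lam < nn_doob_max M F h x} x \<partial>M) \<le> C * (\<integral>\<^sup>+x. g x \<partial>M)"
proof -
  obtain B where B_F: "\<And>n. B n \<in> sets (F n)" and disj: "disjoint_family B"
    and level_set: "{x\<in>space M. lam < nn_doob_max M F h x} = (\<Union>n. B n)"
    and B_level: "\<And>n x. x \<in> B n \<Longrightarrow> lam < nn_cond_exp M (F n) h x"
    using doob_level_set_decomposition by blast
  have B_M [measurable]: "B n \<in> sets M" for n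
    using B_F subalgebra_F unfolding subalgebra_def by auto
  have on_B: "(\<integral>\<^sup>+x. w x * indicator (B n) x \<partial>M) \<le> C * (\<integral>\<^sup>+x. g x * indicator (B n) x \<partial>M)" for n
  proof -
    interpret Fn: sigma_finite_subalgebra M "F n" by (rule sigma_finite_subalgebra_F)
    have [measurable]: "indicator (B n) \<in> borel_measurable (F n)"
      by (rule borel_measurable_indicator[OF B_F])
    have "(\<integral>\<^sup>+x. w x * indicator (B n) x \<partial>M) = (\<integral>\<^sup>+x. indicator (B n) x * nn_cond_exp M (F n) w x \<partial>M)"
      by (subst Fn.nn_cond_exp_intg) (simp_all add: mult.commute)
    also have "\<dots> \<le> (\<integral>\<^sup>+x. C * (indicator (B n) x * nn_cond_exp M (F n) g x) \<partial>M)"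
      using level[of n]
      by (intro nn_integral_mono_AE, eventually_elim) (auto simp: indicator_def B_level)
    also have "\<dots> = C * (\<integral>\<^sup>+x. g x * indicator (B n) x \<partial>M)"
      by (subst nn_integral_cmult) (measurable, subst Fn.nn_cond_exp_intg, simp_all add: mult.commute)
    finally show ?thesis .
  qed
  have "(\<integral>\<^sup>+x. w x * indicator {x\<in>space M. lam < nn_doob_max M F h x} x \<partial>M)
      = (\<integral>\<^sup>+x. (\<Sum>n. w x * indicator (B n) x) \<partial>M)"
    unfolding level_set by (simp add: suminf_indicator[OF disj] ennreal_suminf_cmult)
  also have "\<dots> = (\<Sum>n. \<integral>\<^sup>+x. w x * indicator (B n) x \<partial>M)"
    by (rule nn_integral_suminf) measurable
  also have "\<dots> \<le> (\<Sum>n. C * (\<integral>\<^sup>+x. g x * indicator (B n) x \<partial>M))"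
    by (intro suminf_le on_B) auto
  also have "\<dots> = C * (\<integral>\<^sup>+x. (\<Sum>n. g x * indicator (B n) x) \<partial>M)"
    using nn_integral_suminf[of "\<lambda>n x. g x * indicator (B n) x" M] by (simp add: ennreal_suminf_cmult)
  also have "\<dots> = C * (\<integral>\<^sup>+x. g x * indicator (\<Union>n. B n) x \<partial>M)"
    by (simp add: suminf_indicator[OF disj] ennreal_suminf_cmult)
  also have "\<dots> \<le> C * (\<integral>\<^sup>+x. g x \<partial>M)"
    by (intro mult_left_mono nn_integral_mono) (simp_all add: indicator_def)
  finally show ?thesis .
qed

lemma AE_doob_level_truncated:
  fixes h :: "'a \<Rightarrow> real"
  assumes [measurable]: "h \<in> borel_measurable M" and lam: "lam > 0"
  shows "AE x in M. ennreal (2 * lam) < nn_doob_max M F (\<lambda>y. ennreal (h y)) x \<longrightarrow>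
           ennreal lam < nn_doob_max M F (\<lambda>y. ennreal (if lam < h y then h y else 0)) x"
proof -
  have "AE x in M. \<forall>n. nn_cond_exp M (F n) (\<lambda>y. ennreal (h y)) x
           \<le> nn_cond_exp M (F n) (\<lambda>y. ennreal (if lam < h y then h y else 0)) x + ennreal lam"
    unfolding AE_all_countable
    using sigma_finite_subalgebra.nn_cond_exp_le_truncation[OF sigma_finite_subalgebra_F] by auto
  then show ?thesis
  proof eventually_elim
    case (elim x)
    show ?case
    proof
      assume "ennreal (2 * lam) < nn_doob_max M F (\<lambda>y. ennreal (h y)) x"
      then obtain n where n: "ennreal lam + ennreal lam < nn_cond_exp M (F n) (\<lambda>y. ennreal (h y)) x"
        using lam by (auto simp: nn_doob_max_def less_SUP_iff ennreal_plus[symmetric])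
      have "ennreal lam < nn_cond_exp M (F n) (\<lambda>y. ennreal (if lam < h y then h y else 0)) x"
      proof (rule ccontr)
        assume "\<not> ?thesis"
        then have "nn_cond_exp M (F n) (\<lambda>y. ennreal (h y)) x \<le> ennreal lam + ennreal lam"
          using elim[rule_format, of n] by (meson add_right_mono not_less order_trans)
        then show False using n by simp
      qed
      also have "\<dots> \<le> nn_doob_max M F (\<lambda>y. ennreal (if lam < h y then h y else 0)) x"
        unfolding nn_doob_max_def by (rule SUP_upper) simp
      finally show "ennreal lam < nn_doob_max M F (\<lambda>y. ennreal (if lam < h y then h y else 0)) x" .
    qed
  qed
qed

lemma A1_uniform_weak_type:
  assumes MO: "MO_function M \<phi>" and A1: "mart_Aq M F 1 \<phi>"
  shows "\<exists>K>0. uniform_weak_type M F \<phi> 1 K"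
proof -
  obtain K where K: "\<And>n t. t > 0 \<Longrightarrow> AE x in M.
      nn_cond_exp M (F n) (\<lambda>y. ennreal (\<phi> y t)) x \<le> ennreal K * ennreal (\<phi> x t)"
    using A1 unfolding mart_Aq_def by auto
  have "uniform_weak_type M F \<phi> 1 (max K 1)"
    unfolding uniform_weak_type_def
  proof (intro allI impI ballI)
    fix t lam :: real and h :: "'a \<Rightarrow> real"
    assume t: "t > 0" and lam: "lam > 0" and h_meas [measurable]: "h \<in> borel_measurable M"
      and h: "\<forall>x\<in>space M. h x \<ge> 0"
    note weight_meas [measurable] = MO_functionD(5)[OF MO less_imp_le[OF t]]
    have A1_t: "AE x in M. nn_cond_exp M (F n) (\<lambda>y. ennreal (\<phi> y t)) x \<le> ennreal (max K 1) * ennreal (\<phi> x t)"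
      for n using K[OF t, of n] by eventually_elim (erule order_trans, auto intro!: mult_right_mono ennreal_leI)
    have "(\<integral>\<^sup>+x. ennreal (\<phi> x t) * indicator {x\<in>space M. ennreal lam < nn_doob_max M F (\<lambda>y. ennreal (h y)) x} x \<partial>M)
        \<le> ennreal (max K 1 / lam) * (\<integral>\<^sup>+x. ennreal (h x * \<phi> x t) \<partial>M)"
      by (intro nn_integral_weight_doob_level_le sigma_finite_subalgebra.nn_cond_exp_weight_le_A1
            [OF sigma_finite_subalgebra_F _ lam weight_meas h_meas MO_functionD(4)[OF MO _ t] h[rule_format] A1_t])
         (simp_all, measurable)
    also have "(\<integral>\<^sup>+x. ennreal (h x * \<phi> x t) \<partial>M) = (\<integral>\<^sup>+x. ennreal (h x powr 1 * \<phi> x t) \<partial>M)"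
      using h by (intro nn_integral_cong) simp
    finally show "(\<integral>\<^sup>+x. ennreal (\<phi> x t) * indicator {x\<in>space M. ennreal lam < nn_doob_max M F (\<lambda>y. ennreal (h y)) x} x \<partial>M)
        \<le> ennreal (max K 1 / lam powr 1) * (\<integral>\<^sup>+x. ennreal (h x powr 1 * \<phi> x t) \<partial>M)"
      using lam by simp
  qed
  then show ?thesis by (intro exI[of _ "max K 1"]) auto
qed

lemma Aq_uniform_weak_type_gt_one:
  assumes MO: "MO_function M \<phi>" and Aq: "mart_Aq M F q \<phi>" and q: "q > 1"
  shows "\<exists>K>0. uniform_weak_type M F \<phi> q K"
proof -
  obtain K where K: "\<And>n t. t > 0 \<Longrightarrow> AE x in M.
      nn_cond_exp M (F n) (\<lambda>y. ennreal (\<phi> y t)) x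
      * enn_powr (nn_cond_exp M (F n) (\<lambda>y. ennreal (\<phi> y t powr (- 1 / (q - 1)))) x) (q - 1)
      \<le> ennreal K"
    using Aq q unfolding mart_Aq_def by auto
  have "uniform_weak_type M F \<phi> q (2 powr q * max K 1)"
    unfolding uniform_weak_type_def
  proof (intro allI impI ballI)
    fix t lam :: real and h :: "'a \<Rightarrow> real"
    assume t: "t > 0" and lam: "lam > 0" and h_meas [measurable]: "h \<in> borel_measurable M"
      and h: "\<forall>x\<in>space M. h x \<ge> 0"
    note weight_meas [measurable] = MO_functionD(5)[OF MO less_imp_le[OF t]]
    have Aq_t: "AE x in M. nn_cond_exp M (F n) (\<lambda>y. ennreal (\<phi> y t)) x
        * enn_powr (nn_cond_exp M (F n) (\<lambda>y. ennreal (\<phi> y t powr (- 1 / (q - 1)))) x) (q - 1)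
        \<le> ennreal (max K 1)"
      for n using K[OF t, of n] by eventually_elim (erule order_trans, auto intro!: ennreal_leI)
    show "(\<integral>\<^sup>+x. ennreal (\<phi> x t) * indicator {x\<in>space M. ennreal lam < nn_doob_max M F (\<lambda>y. ennreal (h y)) x} x \<partial>M)
        \<le> ennreal (2 powr q * max K 1 / lam powr q) * (\<integral>\<^sup>+x. ennreal (h x powr q * \<phi> x t) \<partial>M)"
      by (intro nn_integral_weight_doob_level_le sigma_finite_subalgebra.nn_cond_exp_weight_le_Aq
            [OF sigma_finite_subalgebra_F q _ lam weight_meas h_meas MO_functionD(4)[OF MO _ t] h[rule_format] Aq_t])
         (simp_all, measurable)
  qed
  then show ?thesis by (intro exI[of _ "2 powr q * max K 1"]) auto
qed

lemma Aq_uniform_weak_type: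
  assumes MO: "MO_function M \<phi>" and Aq: "mart_Aq M F q \<phi>" and q: "q \<ge> 1"
  obtains K where "K > 0" "uniform_weak_type M F \<phi> q K"
proof (cases "q = 1")
  case True
  then show ?thesis using A1_uniform_weak_type[OF MO] Aq that by blast
next
  case False
  then show ?thesis using Aq_uniform_weak_type_gt_one[OF MO Aq] q that by force
qed

lemma uniform_weak_type_truncated:
  fixes h :: "'a \<Rightarrow> real"
  assumes weak: "uniform_weak_type M F \<phi> q K" and t: "t > 0" and lam: "lam > 0"
    and [measurable]: "h \<in> borel_measurable M" and h: "\<And>x. x \<in> space M \<Longrightarrow> h x \<ge> 0"
    and [measurable]: "(\<lambda>x. \<phi> x t) \<in> borel_measurable M"
  shows "(\<integral>\<^sup>+x. ennreal (\<phi> x t) * indicator {x\<in>space M. ennreal (2 * lam) < nn_doob_max M F (\<lambda>y. ennreal (h y)) x} x \<partial>M)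
           \<le> ennreal (K / lam powr q) * (\<integral>\<^sup>+x. ennreal ((if lam < h x then h x else 0) powr q * \<phi> x t) \<partial>M)"
proof -
  define g where "g y = (if lam < h y then h y else 0)" for y
  have [measurable]: "g \<in> borel_measurable M" unfolding g_def by measurable
  have "(\<integral>\<^sup>+x. ennreal (\<phi> x t) * indicator {x\<in>space M. ennreal (2 * lam) < nn_doob_max M F (\<lambda>y. ennreal (h y)) x} x \<partial>M)
      \<le> (\<integral>\<^sup>+x. ennreal (\<phi> x t) * indicator {x\<in>space M. ennreal lam < nn_doob_max M F (\<lambda>y. ennreal (g y)) x} x \<partial>M)"
    using AE_doob_level_truncated[of h lam] lam
    by (intro nn_integral_mono_AE) (auto elim!: eventually_mono simp: g_def indicator_def)
  also have "\<dots> \<le> ennreal (K / lam powr q) * (\<integral>\<^sup>+x. ennreal (g x powr q * \<phi> x t) \<partial>M)"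
    using weak t lam h unfolding uniform_weak_type_def by (auto simp: g_def)
  finally show ?thesis by (simp add: g_def)
qed

text \<open>Layer-cake over the dyadic levels \<open>2 \<cdot> 2\<^sup>k\<close>: on each level the weak-type estimate is applied
  to \<open>h\<close> truncated below \<open>2\<^sup>k\<close>, and the type bound of \<open>\<phi>\<close> with \<open>p > q\<close> makes the resulting
  series geometric.\<close>
lemma nn_doob_max_modular_le:
  fixes h :: "'a \<Rightarrow> real" and p q K C :: real
  assumes MO: "MO_function M \<phi>" and qp: "q < p" and K: "K > 0" and C: "C > 0"
    and weak: "uniform_weak_type M F \<phi> q K"
    and type: "\<And>x t u. x \<in> space M \<Longrightarrow> t > 0 \<Longrightarrow> 0 < u \<Longrightarrow> u < 4 * t \<Longrightarrow>
                 \<phi> x u \<le> C * (u / t) powr p * \<phi> x t"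
    and [measurable]: "h \<in> borel_measurable M" and h: "\<And>x. x \<in> space M \<Longrightarrow> h x \<ge> 0"
  shows "(\<integral>\<^sup>+x. phi_ext \<phi> x (nn_doob_max M F (\<lambda>y. ennreal (h y)) x) \<partial>M)
           \<le> ennreal (K * C * 4 powr p / (1 - 2 powr (q - p))) * (\<integral>\<^sup>+x. ennreal (\<phi> x (h x)) \<partial>M)"
proof -
  note mono = MO_functionD(1)[OF MO] and zero = MO_functionD(2)[OF MO]
    and nonneg = MO_functionD(3)[OF MO] and pos = MO_functionD(4)[OF MO]
  have [measurable]: "(\<lambda>x. \<phi> x (4 * 2 powr real_of_int k)) \<in> borel_measurable M" for k
    by (rule MO_functionD(5)[OF MO]) simp
  define S where "S x = nn_doob_max M F (\<lambda>y. ennreal (h y)) x" for x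
  define T where "T k x = ennreal (\<phi> x (4 * 2 powr real_of_int k))
                          * indicator {x\<in>space M. ennreal (2 * 2 powr real_of_int k) < S x} x" for k x
  define R where "R k x = ennreal (K / (2 powr real_of_int k) powr q)
      * ennreal ((if 2 powr real_of_int k < h x then h x else 0) powr q * \<phi> x (4 * 2 powr real_of_int k))"
    for k x
  have [measurable]: "T k \<in> borel_measurable M" "R k \<in> borel_measurable M" for k
    unfolding T_def R_def S_def by measurable
  have "(\<integral>\<^sup>+x. phi_ext \<phi> x (S x) \<partial>M)
      \<le> (\<integral>\<^sup>+x. ennreal (K * C * 4 powr p / (1 - 2 powr (q - p))) * ennreal (\<phi> x (h x)) \<partial>M)"
  proof (rule nn_integral_le_via_count_space[where T = T and R = R])
    fix x assume x: "x \<in> space M"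
    show "phi_ext \<phi> x (S x) \<le> (\<integral>\<^sup>+k. T k x \<partial>count_space UNIV)"
      using x phi_ext_le_dyadic_sum[where \<phi> = \<phi> and x = x and s = "S x", OF mono[OF x] zero[OF x] pos[OF x]]
      by (simp add: T_def indicator_def)
    show "(\<integral>\<^sup>+k. R k x \<partial>count_space UNIV)
        \<le> ennreal (K * C * 4 powr p / (1 - 2 powr (q - p))) * ennreal (\<phi> x (h x))"
      unfolding R_def by (rule dyadic_sum_le[OF K C qp]) (use x h nonneg type in auto)
  next
    fix k :: int
    have "(\<integral>\<^sup>+x. T k x \<partial>M) \<le> ennreal (K / (2 powr real_of_int k) powr q)
        * (\<integral>\<^sup>+x. ennreal ((if 2 powr real_of_int k < h x then h x else 0) powr q * \<phi> x (4 * 2 powr real_of_int k)) \<partial>M)"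
      unfolding T_def S_def by (rule uniform_weak_type_truncated[OF weak]) (use h in auto)
    then show "(\<integral>\<^sup>+x. T k x \<partial>M) \<le> (\<integral>\<^sup>+x. R k x \<partial>M)"
      unfolding R_def by (subst nn_integral_cmult) auto
  qed measurable
  also have "\<dots> \<le> ennreal (K * C * 4 powr p / (1 - 2 powr (q - p))) * (\<integral>\<^sup>+x. ennreal (\<phi> x (h x)) \<partial>M)"
    using K C qp by (intro nn_integral_cmult_le) (simp add: powr_less_one)
  finally show ?thesis by (simp add: S_def)
qed

lemma AE_doob_max_le_nn_doob_max:
  fixes f :: "'a \<Rightarrow> real"
  assumes f_meas [measurable]: "f \<in> borel_measurable M" and c: "c > 0"
  shows "AE x in M. doob_max M F f x * ennreal (1 / c) \<le> nn_doob_max M F (\<lambda>y. ennreal (\<bar>f y\<bar> / c)) x"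
proof -
  have "AE x in M. ennreal \<bar>real_cond_exp M (F n) f x\<bar> * ennreal (1 / c)
          \<le> nn_cond_exp M (F n) (\<lambda>y. ennreal (\<bar>f y\<bar> / c)) x" for n
  proof -
    interpret Fn: sigma_finite_subalgebra M "F n" by (rule sigma_finite_subalgebra_F)
    have "(\<lambda>y. ennreal (1 / c) * ennreal \<bar>f y\<bar>) = (\<lambda>y. ennreal (\<bar>f y\<bar> / c))"
      using c by (auto simp: ennreal_mult[symmetric])
    then have "AE x in M. ennreal (1 / c) * nn_cond_exp M (F n) (\<lambda>y. ennreal \<bar>f y\<bar>) x
        = nn_cond_exp M (F n) (\<lambda>y. ennreal (\<bar>f y\<bar> / c)) x"
      using Fn.nn_cond_exp_prod[of "\<lambda>_. ennreal (1 / c)" "\<lambda>y. ennreal \<bar>f y\<bar>"] by simp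
    with Fn.real_cond_exp_abs[OF f_meas] show ?thesis
    proof eventually_elim
      case (elim x)
      then have "ennreal \<bar>real_cond_exp M (F n) f x\<bar> * ennreal (1 / c)
          \<le> nn_cond_exp M (F n) (\<lambda>y. ennreal \<bar>f y\<bar>) x * ennreal (1 / c)"
        by (intro mult_right_mono) simp_all
      with elim show ?case by (simp add: mult.commute)
    qed
  qed
  then have "AE x in M. \<forall>n. ennreal \<bar>real_cond_exp M (F n) f x\<bar> * ennreal (1 / c)
               \<le> nn_cond_exp M (F n) (\<lambda>y. ennreal (\<bar>f y\<bar> / c)) x"
    by (simp add: AE_all_countable)
  then show ?thesis
  proof eventually_elim
    case (elim x)
    have "doob_max M F f x * ennreal (1 / c) = (SUP n. ennreal \<bar>real_cond_exp M (F n) f x\<bar> * ennreal (1 / c))"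
      unfolding doob_max_def by (simp add: SUP_mult_right_ennreal)
    also have "\<dots> \<le> nn_doob_max M F (\<lambda>y. ennreal (\<bar>f y\<bar> / c)) x"
      unfolding nn_doob_max_def using elim by (intro SUP_mono) auto
    finally show ?case .
  qed
qed

lemma doob_max_modular_inequality:
  assumes MO: "MO_function M \<phi>" and Ainf: "mart_Ainf M F \<phi>"
    and lower: "uniformly_lower_type M \<phi> p" and upper: "uniformly_upper_type M \<phi> P"
    and q_index: "q_index M F \<phi> < p" and pP: "p \<le> P"
  obtains C where "C > 0"
    and "\<And>f c. f \<in> borel_measurable M \<Longrightarrow> c > 0 \<Longrightarrow>
           (\<integral>\<^sup>+x. phi_ext \<phi> x (doob_max M F f x * ennreal (1 / c)) \<partial>M)
             \<le> ennreal C * MO_modular M \<phi> (\<lambda>x. f x / c)"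
proof -
  obtain q where q: "q \<ge> 1" and Aq: "mart_Aq M F q \<phi>" and qp: "q < p"
  proof -
    have "{q. q \<ge> 1 \<and> mart_Aq M F q \<phi>} \<noteq> {}" using Ainf unfolding mart_Ainf_def by auto
    from cInf_lessD[OF this q_index[unfolded q_index_def]] that show ?thesis by auto
  qed
  obtain K where K: "K > 0" and weak: "uniform_weak_type M F \<phi> q K"
    using Aq_uniform_weak_type[OF MO Aq q] by blast
  obtain C where C: "C > 0" and type: "\<And>x t u. x \<in> space M \<Longrightarrow> t > 0 \<Longrightarrow> 0 < u \<Longrightarrow> u < 4 * t \<Longrightarrow>
      \<phi> x u \<le> C * (u / t) powr p * \<phi> x t"
  proof (rule uniform_type_bound[OF MO lower upper])
    show "p \<ge> 0" "P \<ge> 0" using q qp pP by linarith+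
  qed blast
  define C_max where "C_max = K * C * 4 powr p / (1 - 2 powr (q - p))"
  have "C_max > 0" using K C qp by (simp add: C_max_def powr_less_one)
  moreover have "(\<integral>\<^sup>+x. phi_ext \<phi> x (doob_max M F f x * ennreal (1 / c)) \<partial>M)
      \<le> ennreal C_max * MO_modular M \<phi> (\<lambda>x. f x / c)"
    if [measurable]: "f \<in> borel_measurable M" and c: "c > 0" for f c
  proof -
    have "AE x in M. phi_ext \<phi> x (doob_max M F f x * ennreal (1 / c))
        \<le> phi_ext \<phi> x (nn_doob_max M F (\<lambda>y. ennreal (\<bar>f y\<bar> / c)) x)"
      using AE_doob_max_le_nn_doob_max[OF that] AE_space
      by eventually_elim (auto intro: phi_ext_mono MO_functionD(1)[OF MO])
    then have "(\<integral>\<^sup>+x. phi_ext \<phi> x (doob_max M F f x * ennreal (1 / c)) \<partial>M)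
        \<le> (\<integral>\<^sup>+x. phi_ext \<phi> x (nn_doob_max M F (\<lambda>y. ennreal (\<bar>f y\<bar> / c)) x) \<partial>M)"
      by (rule nn_integral_mono_AE)
    also have "\<dots> \<le> ennreal C_max * (\<integral>\<^sup>+x. ennreal (\<phi> x (\<bar>f x\<bar> / c)) \<partial>M)"
      unfolding C_max_def using c by (intro nn_doob_max_modular_le[OF MO qp K C weak type]) auto
    finally show ?thesis using c by (simp add: MO_modular_def)
  qed
  ultimately show ?thesis by (rule that)
qed

end

theorem theorem3p2:
  fixes M :: "'a measure" and F :: "nat \<Rightarrow> 'a measure"
    and \<phi> :: "'a \<Rightarrow> real \<Rightarrow> real" and p_minus p_plus :: real
  assumes "prob_space M"
    and "\<And>n. subalgebra M (F n)"
    and "\<And>m n. m \<le> n \<Longrightarrow> sets (F m) \<subseteq> sets (F n)"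
    and "MO_function M \<phi>"
    and "mart_Ainf M F \<phi>"
    and "uniformly_lower_type M \<phi> p_minus"
    and "uniformly_upper_type M \<phi> p_plus"
    and "q_index M F \<phi> < p_minus"
    and "p_minus \<le> p_plus"
  shows "\<exists>C>0. \<forall>f. in_L_phi M \<phi> f \<longrightarrow>
            (AE x in M. doob_max M F f x < \<infinity>)
          \<and> in_L_phi M \<phi> (\<lambda>x. enn2real (doob_max M F f x))
          \<and> L_phi_norm M \<phi> (\<lambda>x. enn2real (doob_max M F f x)) \<le> C * L_phi_norm M \<phi> f
          \<and> (\<integral>\<^sup>+ x. phi_ext \<phi> x (doob_max M F f x) \<partial>M) \<le> ennreal C * MO_modular M \<phi> f"
proof -
  interpret prob_filtration M F
    using assms(1-3) by (simp add: prob_filtration_def prob_filtration_axioms_def)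
  obtain C where "C > 0" and modular: "\<And>f c. f \<in> borel_measurable M \<Longrightarrow> c > 0 \<Longrightarrow>
      (\<integral>\<^sup>+x. phi_ext \<phi> x (doob_max M F f x * ennreal (1 / c)) \<partial>M) \<le> ennreal C * MO_modular M \<phi> (\<lambda>x. f x / c)"
    using doob_max_modular_inequality[OF assms(4-9)] by blast
  have "p_minus > 0" using one_le_q_index[OF assms(5)] assms(8) by linarith
  show ?thesis
  proof (rule L_phi_bounded_if_modular_inequality[OF assms(4,6) \<open>p_minus > 0\<close> _ \<open>C > 0\<close> modular])
    show "doob_max M F f \<in> borel_measurable M" for f
      unfolding doob_max_def by measurable
  qed
qed

end
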